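(* Let $\mathcal{P}$ be a locally finite poset. Then $J\triangleright\zeta_3=\delta_3$; equivalently, for all $(x,y,z)\in\mathcal{F}l^3(\mathcal{P})$, $$\sum_{x\le a\le y\le b\le z}J(x,a,a)\,J(b,b,z)=\delta_3(x,y,z).$$
   Context: $\mathcal{F}l^3(\mathcal{P})=\{(x,y,z)\in\mathcal{P}^3:x\le y\le z\}$. For functions $f,g:\mathcal{F}l^3(\mathcal{P})\to\mathbb{Z}$, define $(f\triangleright g)(x,y,z)=\sum_{x\le a\le y\le b\le z}f(x,a,a)\,g(a,y,b)\,f(b,b,z)$ (sum over $a,b\in\mathcal{P}$). $\zeta_3$ is the constant function $1$ on $\mathcal{F}l^3(\mathcal{P})$, $\delta_3(x,y,z)=1$ if $x=y=z$ and $0$ otherwise, and $J:\mathcal{F}l^3(\mathcal{P})\to\mathbb{Z}$ is the unique function with $\zeta_3\triangleright J=\delta_3$, i.e. $\sum_{x\le a\le y\le b\le z}J(a,y,b)=\delta_3(x,y,z)$ for all $(x,y,z)$. *)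

theory Defs
  imports Main
begin

text \<open>Posets are modelled by a type of class order. Functions on Fl^3(P) are
curried functions of three arguments; only their values on triples x \<le> y \<le> z matter.\<close>

definition locally_finite_poset :: "'a::order itself \<Rightarrow> bool" where
  "locally_finite_poset _ \<longleftrightarrow> (\<forall>x y :: 'a. finite {x..y})"

definition Fl3 :: "('a::order \<times> 'a \<times> 'a) set" where
  "Fl3 = {(x, y, z). x \<le> y \<and> y \<le> z}"

definition tri :: "('a::order \<Rightarrow> 'a \<Rightarrow> 'a \<Rightarrow> int) \<Rightarrow> ('a \<Rightarrow> 'a \<Rightarrow> 'a \<Rightarrow> int)
    \<Rightarrow> 'a \<Rightarrow> 'a \<Rightarrow> 'a \<Rightarrow> int" (infixl "\<triangleright>" 70) where
  "(f \<triangleright> g) x y z = (\<Sum>(a, b) \<in> {x..y} \<times> {y..z}. f x a a * g a y b * f b b z)"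

definition zeta3 :: "'a::order \<Rightarrow> 'a \<Rightarrow> 'a \<Rightarrow> int" where
  "zeta3 x y z = 1"

definition delta3 :: "'a::order \<Rightarrow> 'a \<Rightarrow> 'a \<Rightarrow> int" where
  "delta3 x y z = (if x = y \<and> y = z then 1 else 0)"

definition J :: "'a::order \<Rightarrow> 'a \<Rightarrow> 'a \<Rightarrow> int" where
  "J = (THE j. (\<forall>x y z. (x, y, z) \<notin> Fl3 \<longrightarrow> j x y z = 0) \<and>
               (\<forall>x y z. (x, y, z) \<in> Fl3 \<longrightarrow> (zeta3 \<triangleright> j) x y z = delta3 x y z))"

end

theory Submission
  imports Defs
begin

text \<open>J is well defined because its defining equation expresses J x y z through the values
  J a y b with {a..y} \<subseteq> {x..y}, {y..b} \<subseteq> {y..z} and (a, b) \<noteq> (x, z), a well-founded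
  recursion when intervals are finite. At the flags (x, y, y) and (x, x, y) that equation says
  that g x y = J x y y is a right and h x y = J x x y a left inverse of zeta in the incidence
  algebra. By associativity g = h, so both are two-sided inverses (the Moebius function), and
  the sum in question factors as (g \<star> zeta2) x y * (zeta2 \<star> h) y z = delta2 x y * delta2 y z.\<close>

text \<open>Since {x..y} is empty unless x \<le> y, (f \<star> g) x y = 0 = delta2 x y whenever x \<le> y fails,
  so inverse laws can be stated as plain equations of functions.\<close>

definition incidence_mult :: "('a::order \<Rightarrow> 'a \<Rightarrow> 'b::semiring_0) \<Rightarrow> ('a \<Rightarrow> 'a \<Rightarrow> 'b)
    \<Rightarrow> 'a \<Rightarrow> 'a \<Rightarrow> 'b" (infixl "\<star>" 70) where
  "(f \<star> g) x y = (\<Sum>a\<in>{x..y}. f x a * g a y)"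

definition zeta2 :: "'a::order \<Rightarrow> 'a \<Rightarrow> 'b::semiring_1" where
  "zeta2 x y = 1"

definition delta2 :: "'a::order \<Rightarrow> 'a \<Rightarrow> 'b::semiring_1" where
  "delta2 x y = (if x = y then 1 else 0)"

lemma incidence_mult_assoc:
  fixes f g h :: "'a::order \<Rightarrow> 'a \<Rightarrow> 'b::semiring_0"
  assumes fin: "\<And>x y::'a. finite {x..y}"
  shows "(f \<star> g) \<star> h = f \<star> (g \<star> h)"
proof (intro ext)
  fix x y :: 'a
  have "((f \<star> g) \<star> h) x y = (\<Sum>b\<in>{x..y}. \<Sum>a\<in>{a \<in> {x..y}. a \<le> b}. f x a * g a b * h b y)"
    by (auto simp: incidence_mult_def sum_distrib_right intro!: sum.cong)
  also have "\<dots> = (\<Sum>a\<in>{x..y}. \<Sum>b\<in>{b \<in> {x..y}. a \<le> b}. f x a * g a b * h b y)"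
    using sum.swap_restrict[OF fin fin] by simp
  also have "\<dots> = (f \<star> (g \<star> h)) x y"
    by (auto simp: incidence_mult_def sum_distrib_left mult.assoc intro!: sum.cong
        intro: order_trans)
  finally show "((f \<star> g) \<star> h) x y = (f \<star> (g \<star> h)) x y" .
qed

lemma incidence_mult_delta2_right:
  assumes "finite {x..y}" "x \<le> y"
  shows "(f \<star> delta2) x y = f x y"
proof -
  have "(f \<star> delta2) x y = (\<Sum>a\<in>{x..y}. if a = y then f x a else 0)"
    by (auto simp: incidence_mult_def delta2_def intro: sum.cong)
  then show ?thesis
    using assms by (simp add: sum.delta')
qed

lemma incidence_mult_delta2_left:
  assumes "finite {x..y}" "x \<le> y"
  shows "(delta2 \<star> f) x y = f x y"
proof -
  have "(delta2 \<star> f) x y = (\<Sum>a\<in>{x..y}. if x = a then f a y else 0)"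
    by (auto simp: incidence_mult_def delta2_def intro: sum.cong)
  then show ?thesis
    using assms by (simp add: sum.delta)
qed

lemma left_inverse_eq_right_inverse:
  fixes f g h :: "'a::order \<Rightarrow> 'a \<Rightarrow> 'b::semiring_1"
  assumes fin: "\<And>x y::'a. finite {x..y}"
    and left: "h \<star> f = delta2" and right: "f \<star> g = delta2"
    and "x \<le> y"
  shows "h x y = g x y"
proof -
  have "h x y = (h \<star> (f \<star> g)) x y"
    using fin \<open>x \<le> y\<close> by (simp add: right incidence_mult_delta2_right)
  also have "\<dots> = ((h \<star> f) \<star> g) x y"
    by (simp add: incidence_mult_assoc[OF fin])
  also have "\<dots> = g x y"
    using fin \<open>x \<le> y\<close> by (simp add: left incidence_mult_delta2_left)
  finally show ?thesis .
qed

definition zeta3_inverse :: "('a::order \<Rightarrow> 'a \<Rightarrow> 'a \<Rightarrow> int) \<Rightarrow> bool" where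
  "zeta3_inverse j \<longleftrightarrow> (\<forall>x y z. (x, y, z) \<notin> Fl3 \<longrightarrow> j x y z = 0) \<and>
     (\<forall>x y z. (x, y, z) \<in> Fl3 \<longrightarrow> (zeta3 \<triangleright> j) x y z = delta3 x y z)"

definition flag_shrink :: "(('a::order \<times> 'a \<times> 'a) \<times> ('a \<times> 'a \<times> 'a)) set" where
  "flag_shrink = {((a, y', b), (x, y, z)).
     y' = y \<and> x \<le> a \<and> a \<le> y \<and> y \<le> b \<and> b \<le> z \<and> (a, b) \<noteq> (x, z)}"

lemma wf_flag_shrink:
  assumes fin: "\<And>x y::'a::order. finite {x..y}"
  shows "wf (flag_shrink :: (('a \<times> 'a \<times> 'a) \<times> ('a \<times> 'a \<times> 'a)) set)"
proof (rule wf_subset[OF wf_measure])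
  have "card {a..y} + card {y..b} < card {x..y} + card {y..z}"
    if "((a, y, b), (x, y, z)) \<in> flag_shrink" for a b x y z :: 'a
  proof -
    have sub: "{a..y} \<subseteq> {x..y}" "{y..b} \<subseteq> {y..z}"
      using that by (auto simp: flag_shrink_def intro: order_trans)
    have "{a..y} \<noteq> {x..y} \<or> {y..b} \<noteq> {y..z}"
      using that by (auto simp: flag_shrink_def dest: antisym)
    then have "{a..y} \<subset> {x..y} \<or> {y..b} \<subset> {y..z}"
      using sub by blast
    then have "card {a..y} < card {x..y} \<or> card {y..b} < card {y..z}"
      using psubset_card_mono[OF fin] by blast
    moreover have "card {a..y} \<le> card {x..y}" "card {y..b} \<le> card {y..z}"
      using sub by (simp_all add: card_mono[OF fin])
    ultimately show ?thesis by linarith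
  qed
  then show "flag_shrink \<subseteq> measure (\<lambda>(x::'a, y, z). card {x..y} + card {y..z})"
    by (auto simp: flag_shrink_def)
qed

definition zeta3_recursion :: "('a::order \<times> 'a \<times> 'a \<Rightarrow> int) \<Rightarrow> 'a \<times> 'a \<times> 'a \<Rightarrow> int" where
  "zeta3_recursion j = (\<lambda>(x, y, z). if x \<le> y \<and> y \<le> z
     then delta3 x y z - (\<Sum>(a, b) \<in> {x..y} \<times> {y..z} - {(x, z)}. j (a, y, b)) else 0)"

lemma adm_wf_zeta3_recursion: "adm_wf flag_shrink zeta3_recursion"
  by (fastforce simp: adm_wf_def zeta3_recursion_def flag_shrink_def intro!: sum.cong)

lemma adm_wf_fixpoint_unique:
  assumes "wf R" "adm_wf R F" "f = F f" "g = F g"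
  shows "f = g"
proof
  fix t
  show "f t = g t"
    using \<open>wf R\<close>
  proof (induction t rule: wf_induct_rule)
    case (less t)
    then have "F f t = F g t"
      using \<open>adm_wf R F\<close> by (simp add: adm_wf_def)
    then show ?case
      by (metis \<open>f = F f\<close> \<open>g = F g\<close>)
  qed
qed

lemma zeta3_tri_split:
  fixes x y z :: "'a::order"
  assumes fin: "\<And>x y::'a. finite {x..y}" and "x \<le> y" "y \<le> z"
  shows "(zeta3 \<triangleright> j) x y z = j x y z + (\<Sum>(a, b) \<in> {x..y} \<times> {y..z} - {(x, z)}. j a y b)"
proof -
  have "(zeta3 \<triangleright> j) x y z = (\<Sum>(a, b) \<in> {x..y} \<times> {y..z}. j a y b)"
    by (simp add: tri_def zeta3_def)
  also have "\<dots> = j x y z + (\<Sum>(a, b) \<in> {x..y} \<times> {y..z} - {(x, z)}. j a y b)"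
    using assms by (subst sum.remove[of _ "(x, z)"]) (simp_all add: fin)
  finally show ?thesis .
qed

lemma zeta3_inverse_iff_fixpoint:
  assumes fin: "\<And>x y::'a::order. finite {x..y}"
  shows "zeta3_inverse j \<longleftrightarrow>
    (\<lambda>(x, y, z). j x y z) = zeta3_recursion (\<lambda>(x::'a, y, z). j x y z)"
proof -
  have "zeta3_inverse j \<longleftrightarrow> (\<forall>x y z.
      if x \<le> y \<and> y \<le> z then (zeta3 \<triangleright> j) x y z = delta3 x y z else j x y z = 0)"
    by (auto simp: zeta3_inverse_def Fl3_def)
  also have "\<dots> \<longleftrightarrow> (\<forall>x y z. j x y z = zeta3_recursion (\<lambda>(x, y, z). j x y z) (x, y, z))"
    by (simp add: zeta3_recursion_def zeta3_tri_split[OF fin] eq_diff_eq)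
  finally show ?thesis
    by (simp add: fun_eq_iff)
qed

lemma ex1_zeta3_inverse:
  assumes fin: "\<And>x y::'a::order. finite {x..y}"
  shows "\<exists>!j::'a \<Rightarrow> 'a \<Rightarrow> 'a \<Rightarrow> int. zeta3_inverse j"
proof (rule ex_ex1I)
  let ?j = "wfrec flag_shrink zeta3_recursion :: 'a \<times> 'a \<times> 'a \<Rightarrow> int"
  have "?j = zeta3_recursion ?j"
    by (rule wfrec_fixpoint[OF wf_flag_shrink[OF fin] adm_wf_zeta3_recursion])
  then have "zeta3_inverse (\<lambda>x y z. ?j (x, y, z))"
    by (simp add: zeta3_inverse_iff_fixpoint[OF fin])
  then show "\<exists>j::'a \<Rightarrow> 'a \<Rightarrow> 'a \<Rightarrow> int. zeta3_inverse j"
    by (rule exI[of zeta3_inverse])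
next
  fix j1 j2 :: "'a \<Rightarrow> 'a \<Rightarrow> 'a \<Rightarrow> int"
  assume "zeta3_inverse j1" "zeta3_inverse j2"
  then have "(\<lambda>(x, y, z). j1 x y z) = zeta3_recursion (\<lambda>(x, y, z). j1 x y z)"
    and "(\<lambda>(x, y, z). j2 x y z) = zeta3_recursion (\<lambda>(x, y, z). j2 x y z)"
    by (simp_all add: zeta3_inverse_iff_fixpoint[OF fin])
  then have "(\<lambda>(x, y, z). j1 x y z) = (\<lambda>(x, y, z). j2 x y z)"
    by (rule adm_wf_fixpoint_unique[OF wf_flag_shrink[OF fin] adm_wf_zeta3_recursion])
  then show "j1 = j2"
    by (simp add: fun_eq_iff)
qed

lemma zeta3_inverse_J:
  assumes fin: "\<And>x y::'a::order. finite {x..y}"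
  shows "zeta3_inverse (J :: 'a \<Rightarrow> 'a \<Rightarrow> 'a \<Rightarrow> int)"
  using theI'[OF ex1_zeta3_inverse[OF fin]] by (simp add: J_def zeta3_inverse_def)

lemma zeta3_inverse_imp_right_inverse:
  fixes j :: "'a::order \<Rightarrow> 'a \<Rightarrow> 'a \<Rightarrow> int"
  assumes "zeta3_inverse j"
  shows "zeta2 \<star> (\<lambda>x y. j x y y) = delta2"
proof (intro ext)
  fix x y :: 'a
  show "(zeta2 \<star> (\<lambda>x y. j x y y)) x y = delta2 x y"
  proof (cases "x \<le> y")
    case True
    then have "(zeta3 \<triangleright> j) x y y = delta3 x y y"
      using assms by (simp add: zeta3_inverse_def Fl3_def)
    then show ?thesis
      by (simp add: tri_def zeta3_def delta3_def incidence_mult_def zeta2_def delta2_def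
          sum.cartesian_product[symmetric])
  qed (auto simp: incidence_mult_def delta2_def)
qed

lemma zeta3_inverse_imp_left_inverse:
  fixes j :: "'a::order \<Rightarrow> 'a \<Rightarrow> 'a \<Rightarrow> int"
  assumes "zeta3_inverse j"
  shows "(\<lambda>x y. j x x y) \<star> zeta2 = delta2"
proof (intro ext)
  fix x y :: 'a
  show "((\<lambda>x y. j x x y) \<star> zeta2) x y = delta2 x y"
  proof (cases "x \<le> y")
    case True
    then have "(zeta3 \<triangleright> j) x x y = delta3 x x y"
      using assms by (simp add: zeta3_inverse_def Fl3_def)
    then show ?thesis
      by (simp add: tri_def zeta3_def delta3_def incidence_mult_def zeta2_def delta2_def
          sum.cartesian_product[symmetric])
  qed (auto simp: incidence_mult_def delta2_def)
qed

theorem corollary5p3: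
  assumes "locally_finite_poset TYPE('a::order)"
  shows "\<forall>x y z :: 'a. (x, y, z) \<in> Fl3 \<longrightarrow> (J \<triangleright> zeta3) x y z = delta3 x y z"
proof (intro allI impI)
  have fin: "\<And>x y::'a. finite {x..y}"
    using assms by (simp add: locally_finite_poset_def)
  define g :: "'a \<Rightarrow> 'a \<Rightarrow> int" where "g x y = J x y y" for x y
  define h :: "'a \<Rightarrow> 'a \<Rightarrow> int" where "h x y = J x x y" for x y
  have right: "zeta2 \<star> g = delta2" and left: "h \<star> zeta2 = delta2"
    using zeta3_inverse_imp_right_inverse[OF zeta3_inverse_J[OF fin]]
      zeta3_inverse_imp_left_inverse[OF zeta3_inverse_J[OF fin]]
    by (simp_all add: g_def[abs_def] h_def[abs_def])
  have h_eq_g: "h x y = g x y" if "x \<le> y" for x y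
    using left_inverse_eq_right_inverse[OF fin left right that] .
  fix x y z :: 'a
  have "(g \<star> zeta2) x y = (h \<star> zeta2) x y" "(zeta2 \<star> h) y z = (zeta2 \<star> g) y z"
    by (simp_all add: incidence_mult_def h_eq_g)
  then have factors: "(g \<star> zeta2) x y = delta2 x y" "(zeta2 \<star> h) y z = delta2 y z"
    by (simp_all add: left right)
  have "(J \<triangleright> zeta3) x y z = (g \<star> zeta2) x y * (zeta2 \<star> h) y z"
    by (simp add: tri_def zeta3_def incidence_mult_def zeta2_def g_def h_def sum_product
        sum.cartesian_product)
  then show "(J \<triangleright> zeta3) x y z = delta3 x y z"
    by (simp add: factors delta2_def delta3_def)
qed

end
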